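(* Let $n$ agents have additive $\alpha$-ratio-bounded cost functions ($\alpha\ge1$) over chores $[m]$, and let $\ell=\lceil m/n\rceil\ge3$. Then the full allocation produced by the round-robin procedure (with any fixed ordering of agents and any tie-breaking) is $\left(1+\frac{\alpha-1}{\ell-1}\right)$-EFX.
   Context: A cost function $C:2^{[m]}\to\mathbb{R}_{\ge0}$ is additive if $C(S)=\sum_{c\in S}C(\{c\})$, and $\alpha$-ratio-bounded if $\max_b C(\{b\})/\min_b C(\{b\})\le\alpha$ (positive single-chore costs). Round-robin: fix an ordering $i_1,\dots,i_n$ of agents; in successive rounds, for $t=1,\dots,n$, agent $i_t$ takes a chore of minimum cost to itself among the remaining unallocated chores, until all chores are allocated (so there are $\lceil m/n\rceil$ rounds, the last possibly incomplete). An allocation is $\gamma$-EFX if for all agents $i,j$ and every $c\in X_i$, $C_i(X_i\setminus\{c\})\le\gamma\,C_i(X_j)$. *)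

theory Defs
  imports Complex_Main
begin

text \<open>Agents are 0..n-1, chores are 0..m-1. C i c is the cost of chore c for agent i;
  additive: cost of a bundle S is the sum over S.\<close>

definition cost :: "(nat \<Rightarrow> nat \<Rightarrow> real) \<Rightarrow> nat \<Rightarrow> nat set \<Rightarrow> real" where
  "cost C i S = (\<Sum>c\<in>S. C i c)"

definition ratio_bounded :: "nat \<Rightarrow> real \<Rightarrow> (nat \<Rightarrow> real) \<Rightarrow> bool" where
  "ratio_bounded m \<alpha> c \<longleftrightarrow> (\<forall>b<m. c b > 0) \<and>
     Max (c ` {..<m}) / Min (c ` {..<m}) \<le> \<alpha>"

text \<open>A run of round-robin with ordering \<sigma> (a permutation of the agents, \<sigma> t = agent in
  position t of each round) and some tie-breaking: p k is the chore taken at step k (k < m);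
  step k is performed by agent \<sigma> (k mod n), who takes a chore of minimum own cost among
  the chores not yet taken.\<close>

definition round_robin_run ::
  "nat \<Rightarrow> nat \<Rightarrow> (nat \<Rightarrow> nat \<Rightarrow> real) \<Rightarrow> (nat \<Rightarrow> nat) \<Rightarrow> (nat \<Rightarrow> nat) \<Rightarrow> bool" where
  "round_robin_run n m C \<sigma> p \<longleftrightarrow>
     bij_betw p {..<m} {..<m} \<and>
     (\<forall>k<m. \<forall>c\<in>{..<m} - p ` {..<k}. C (\<sigma> (k mod n)) (p k) \<le> C (\<sigma> (k mod n)) c)"

definition rr_bundle :: "nat \<Rightarrow> nat \<Rightarrow> (nat \<Rightarrow> nat) \<Rightarrow> (nat \<Rightarrow> nat) \<Rightarrow> nat \<Rightarrow> nat set" where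
  "rr_bundle n m \<sigma> p i = p ` {k. k < m \<and> \<sigma> (k mod n) = i}"

definition EFX_approx ::
  "nat \<Rightarrow> (nat \<Rightarrow> nat \<Rightarrow> real) \<Rightarrow> real \<Rightarrow> (nat \<Rightarrow> nat set) \<Rightarrow> bool" where
  "EFX_approx n C \<gamma> X \<longleftrightarrow>
     (\<forall>i<n. \<forall>j<n. \<forall>c\<in>X i. cost C i (X i - {c}) \<le> \<gamma> * cost C i (X j))"

end

theory Submission
  imports Defs
begin

text \<open>Let agent i act at position t of each round and agent j at position s, and let
  d = (s - t) mod n. At every step k of i with k + d < m, the chore that j takes at step
  k + d was still available, so i paid at most its own cost of it; only in the last round
  can k + d run past m, which leaves at most one unmatched chore of i, of cost at most \<alpha>\<mu>
  (\<mu> the cheapest cost for i). Hence C_i(X_i) \<le> C_i(X_j) + \<alpha>\<mu>, and removing any chore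
  from X_i saves at least \<mu>. Since j receives at least \<lceil>m/n\<rceil> - 1 chores,
  (\<lceil>m/n\<rceil> - 1)\<mu> \<le> C_i(X_j), which turns the additive error (\<alpha> - 1)\<mu> into the stated factor.\<close>

definition rr_steps :: "nat \<Rightarrow> nat \<Rightarrow> nat \<Rightarrow> nat set" where
  "rr_steps n m s = {k. k < m \<and> k mod n = s}"

lemma finite_rr_steps [simp]: "finite (rr_steps n m s)"
  by (simp add: rr_steps_def)

lemma eq_if_mod_eq_less_dist:
  fixes a b n :: nat
  assumes "a \<le> b" "b < a + n" "a mod n = b mod n"
  shows "a = b"
proof -
  have "n dvd b - a" using assms(1,3) by (simp add: mod_eq_dvd_iff_nat[symmetric])
  moreover have "b - a < n" using assms(1,2) by linarith
  ultimately have "b - a = 0" using nat_dvd_not_less by blast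
  thus ?thesis using assms(1) by simp
qed

lemma card_rr_steps_ge:
  assumes "s < n"
  shows "m div n \<le> card (rr_steps n m s)"
proof -
  have "(\<lambda>q. s + q * n) ` {..<m div n} \<subseteq> rr_steps n m s"
  proof
    fix x assume "x \<in> (\<lambda>q. s + q * n) ` {..<m div n}"
    then obtain q where q: "q < m div n" "x = s + q * n" by auto
    have "x < Suc q * n" using q(2) assms by simp
    also have "\<dots> \<le> m div n * n" using q(1) by (intro mult_right_mono) auto
    also have "\<dots> \<le> m" by simp
    finally show "x \<in> rr_steps n m s" using q(2) assms by (simp add: rr_steps_def)
  qed
  moreover have "inj_on (\<lambda>q. s + q * n) {..<m div n}"
    using assms by (auto simp: inj_on_def)
  ultimately show ?thesis
    using card_inj_on_le[OF _ _ finite_rr_steps] by fastforce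
qed

lemma ceiling_div_minus_one_le_div:
  "real_of_int \<lceil>real m / real n\<rceil> - 1 \<le> real (m div n)"
  using ceiling_diff_floor_le_1[of "real m / real n"]
  by (simp add: floor_divide_of_nat_eq)

lemma sum_rr_steps_le_shifted:
  fixes f :: "nat \<Rightarrow> real"
  assumes "s < n" "t < n"
    and nonneg: "\<And>k. k < m \<Longrightarrow> 0 \<le> f k"
    and bound: "\<And>k. k < m \<Longrightarrow> f k \<le> M" and "0 \<le> M"
    and greedy: "\<And>k k'. k mod n = t \<Longrightarrow> k \<le> k' \<Longrightarrow> k' < m \<Longrightarrow> f k \<le> f k'"
  shows "(\<Sum>k\<in>rr_steps n m t. f k) \<le> (\<Sum>k\<in>rr_steps n m s. f k) + M"
proof -
  define d where "d = (s + n - t) mod n"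
  have "d < n" using assms(1) by (simp add: d_def)
  have shift: "(k + d) mod n = s" if "k mod n = t" for k
  proof -
    have "(k + d) mod n = (k mod n + (s + n - t)) mod n" by (metis d_def mod_add_left_eq mod_add_right_eq)
    also have "\<dots> = (s + n) mod n" using that assms(2) by simp
    finally show ?thesis using assms(1) by simp
  qed
  define A where "A = {k \<in> rr_steps n m t. k + d < m}"
  define B where "B = {k \<in> rr_steps n m t. m \<le> k + d}"
  have "(\<Sum>k\<in>A. f k) \<le> (\<Sum>k\<in>A. f (k + d))"
    by (rule sum_mono, rule greedy) (auto simp: A_def rr_steps_def)
  also have "\<dots> = (\<Sum>k\<in>(\<lambda>k. k + d) ` A. f k)"
    by (simp add: sum.reindex)
  also have "\<dots> \<le> (\<Sum>k\<in>rr_steps n m s. f k)"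
    by (rule sum_mono2) (auto simp: A_def rr_steps_def shift intro: nonneg)
  finally have sum_A: "(\<Sum>k\<in>A. f k) \<le> (\<Sum>k\<in>rr_steps n m s. f k)" .
  have "card B \<le> 1"
  proof -
    have "x = y" if "x \<in> B" "y \<in> B" "x \<le> y" for x y
    proof (rule eq_if_mod_eq_less_dist)
      show "x \<le> y" by fact
      show "y < x + n" using that \<open>d < n\<close> unfolding B_def rr_steps_def by simp
      show "x mod n = y mod n" using that unfolding B_def rr_steps_def by simp
    qed
    hence "\<forall>x\<in>B. \<forall>y\<in>B. x = y" using nat_le_linear by blast
    thus ?thesis by (simp add: card_le_Suc0_iff_eq B_def)
  qed
  have "(\<Sum>k\<in>B. f k) \<le> real (card B) * M"
    using sum_bounded_above[of B f M] bound unfolding B_def rr_steps_def by blast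
  also have "\<dots> \<le> M"
    using \<open>card B \<le> 1\<close> \<open>0 \<le> M\<close> by (simp add: mult_left_le_one_le)
  finally have "(\<Sum>k\<in>B. f k) \<le> M" .
  moreover have "rr_steps n m t = A \<union> B" "A \<inter> B = {}" "finite A" "finite B"
    by (auto simp: A_def B_def)
  ultimately show ?thesis
    using sum_A sum.union_disjoint[of A B f] by simp
qed

lemma ratio_bounded_band:
  assumes "ratio_bounded m \<alpha> c" "0 < m"
  obtains \<mu> where "0 < \<mu>" "\<And>b. b < m \<Longrightarrow> \<mu> \<le> c b" "\<And>b. b < m \<Longrightarrow> c b \<le> \<alpha> * \<mu>"
proof
  let ?\<mu> = "Min (c ` {..<m})"
  have pos: "\<forall>b<m. 0 < c b" and ratio: "Max (c ` {..<m}) / ?\<mu> \<le> \<alpha>"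
    using assms(1) by (auto simp: ratio_bounded_def)
  show "0 < ?\<mu>" using pos assms(2) by (subst Min_gr_iff) auto
  show "?\<mu> \<le> c b" if "b < m" for b using that by simp
  show "c b \<le> \<alpha> * ?\<mu>" if "b < m" for b
  proof -
    have "c b \<le> Max (c ` {..<m})" using that by simp
    also have "\<dots> \<le> \<alpha> * ?\<mu>" using ratio \<open>0 < ?\<mu>\<close> by (simp add: divide_le_eq)
    finally show ?thesis .
  qed
qed

lemma round_robin_run_pick_le_later:
  assumes "round_robin_run n m C \<sigma> p" "k \<le> k'" "k' < m"
  shows "C (\<sigma> (k mod n)) (p k) \<le> C (\<sigma> (k mod n)) (p k')"
proof -
  have "inj_on p {..<m}" "p ` {..<m} = {..<m}"
    using assms(1) by (auto simp: round_robin_run_def bij_betw_def)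
  have "p k' \<notin> p ` {..<k}"
  proof
    assume "p k' \<in> p ` {..<k}"
    then obtain x where "x < k" "p k' = p x" by auto
    with \<open>inj_on p {..<m}\<close> have "k' = x" using assms(2,3) by (simp add: inj_on_def)
    thus False using \<open>x < k\<close> assms(2) by simp
  qed
  hence "p k' \<in> {..<m} - p ` {..<k}"
    using \<open>p ` {..<m} = {..<m}\<close> assms(3) by auto
  thus ?thesis using assms(1,2,3) by (simp add: round_robin_run_def)
qed

lemma rr_bundle_eq_image_rr_steps:
  assumes "inj_on \<sigma> {..<n}" "s < n"
  shows "rr_bundle n m \<sigma> p (\<sigma> s) = p ` rr_steps n m s"
proof -
  have "\<sigma> (k mod n) = \<sigma> s \<longleftrightarrow> k mod n = s" for k
    using assms by (auto simp: inj_on_def)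
  thus ?thesis by (simp add: rr_bundle_def rr_steps_def)
qed

lemma cost_rr_bundle:
  assumes "round_robin_run n m C \<sigma> p" "inj_on \<sigma> {..<n}" "s < n"
  shows "cost C i (rr_bundle n m \<sigma> p (\<sigma> s)) = (\<Sum>k\<in>rr_steps n m s. C i (p k))"
proof -
  have "inj_on p (rr_steps n m s)"
    using assms(1) by (auto simp: round_robin_run_def bij_betw_def rr_steps_def inj_on_def)
  thus ?thesis
    using assms(2,3) by (simp add: cost_def rr_bundle_eq_image_rr_steps sum.reindex)
qed

lemma cost_rr_bundle_ge:
  assumes "round_robin_run n m C \<sigma> p" "inj_on \<sigma> {..<n}" "s < n"
    and "0 \<le> \<mu>" "\<And>b. b < m \<Longrightarrow> \<mu> \<le> C i b"
  shows "real (m div n) * \<mu> \<le> cost C i (rr_bundle n m \<sigma> p (\<sigma> s))"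
proof -
  have p_range: "p k < m" if "k < m" for k
    using assms(1) that by (auto simp: round_robin_run_def bij_betw_def)
  have "real (m div n) * \<mu> \<le> real (card (rr_steps n m s)) * \<mu>"
    using card_rr_steps_ge[OF assms(3)] assms(4) by (intro mult_right_mono) auto
  also have "\<dots> = (\<Sum>k\<in>rr_steps n m s. \<mu>)" by simp
  also have "\<dots> \<le> (\<Sum>k\<in>rr_steps n m s. C i (p k))"
    by (rule sum_mono) (auto simp: rr_steps_def intro: assms(5) p_range)
  finally show ?thesis using cost_rr_bundle[OF assms(1-3)] by simp
qed

lemma rr_bundle_subset: "round_robin_run n m C \<sigma> p \<Longrightarrow> rr_bundle n m \<sigma> p i \<subseteq> {..<m}"
  by (auto simp: round_robin_run_def bij_betw_def rr_bundle_def)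

lemma rr_envy_additive:
  assumes run: "round_robin_run n m C \<sigma> p" and "inj_on \<sigma> {..<n}" "s < n" "t < n"
    and "0 \<le> \<mu>" and lower: "\<And>b. b < m \<Longrightarrow> \<mu> \<le> C (\<sigma> t) b"
    and upper: "\<And>b. b < m \<Longrightarrow> C (\<sigma> t) b \<le> \<alpha> * \<mu>"
    and c: "c \<in> rr_bundle n m \<sigma> p (\<sigma> t)"
  shows "cost C (\<sigma> t) (rr_bundle n m \<sigma> p (\<sigma> t) - {c})
           \<le> cost C (\<sigma> t) (rr_bundle n m \<sigma> p (\<sigma> s)) + (\<alpha> - 1) * \<mu>"
proof -
  let ?i = "\<sigma> t" and ?f = "\<lambda>k. C (\<sigma> t) (p k)"
  have p_range: "p k < m" if "k < m" for k
    using run that by (auto simp: round_robin_run_def bij_betw_def)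
  have "c < m" using c rr_bundle_subset[OF run] by blast
  have "finite (rr_bundle n m \<sigma> p ?i)"
    using rr_bundle_subset[OF run] finite_subset by blast
  hence "cost C ?i (rr_bundle n m \<sigma> p ?i - {c}) = cost C ?i (rr_bundle n m \<sigma> p ?i) - C ?i c"
    using c by (simp add: cost_def sum_diff1)
  also have "\<dots> \<le> (\<Sum>k\<in>rr_steps n m t. ?f k) - \<mu>"
    using cost_rr_bundle[OF assms(1,2,4)] lower[OF \<open>c < m\<close>] by simp
  also have "(\<Sum>k\<in>rr_steps n m t. ?f k) \<le> (\<Sum>k\<in>rr_steps n m s. ?f k) + \<alpha> * \<mu>"
  proof (rule sum_rr_steps_le_shifted)
    show "0 \<le> ?f k" "?f k \<le> \<alpha> * \<mu>" if "k < m" for k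
      using lower[OF p_range[OF that]] upper[OF p_range[OF that]] \<open>0 \<le> \<mu>\<close> by auto
    show "0 \<le> \<alpha> * \<mu>"
      using lower[OF \<open>c < m\<close>] upper[OF \<open>c < m\<close>] \<open>0 \<le> \<mu>\<close> by linarith
    show "?f k \<le> ?f k'" if "k mod n = t" "k \<le> k'" "k' < m" for k k'
      using round_robin_run_pick_le_later[OF run that(2,3)] that(1) by simp
  qed fact+
  finally show ?thesis
    using cost_rr_bundle[OF assms(1-3)] by (simp add: algebra_simps)
qed

lemma additive_error_le_factor:
  fixes x T \<mu> \<alpha> l :: real
  assumes "1 < l" "1 \<le> \<alpha>" "x \<le> T + (\<alpha> - 1) * \<mu>" "(l - 1) * \<mu> \<le> T"
  shows "x \<le> (1 + (\<alpha> - 1) / (l - 1)) * T"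
proof -
  have "(\<alpha> - 1) * \<mu> = (\<alpha> - 1) / (l - 1) * ((l - 1) * \<mu>)" using assms(1) by simp
  also have "\<dots> \<le> (\<alpha> - 1) / (l - 1) * T"
    using assms(1,2,4) by (intro mult_left_mono) auto
  finally show ?thesis using assms(3) by (simp add: algebra_simps)
qed

theorem mainTheorem9:
  fixes n m :: nat and \<alpha> :: real and C :: "nat \<Rightarrow> nat \<Rightarrow> real"
    and \<sigma> p :: "nat \<Rightarrow> nat"
  assumes "n \<ge> 1"
    and "\<alpha> \<ge> 1"
    and "\<forall>i<n. ratio_bounded m \<alpha> (C i)"
    and "\<lceil>real m / real n\<rceil> \<ge> 3"
    and "bij_betw \<sigma> {..<n} {..<n}"
    and "round_robin_run n m C \<sigma> p"
  shows "EFX_approx n C (1 + (\<alpha> - 1) / (real_of_int \<lceil>real m / real n\<rceil> - 1)) (rr_bundle n m \<sigma> p)"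
proof -
  define l where "l = real_of_int \<lceil>real m / real n\<rceil>"
  have "1 < l" "0 < m" using assms(4) by (auto simp: l_def intro: Nat.gr0I)
  have inj: "inj_on \<sigma> {..<n}" and onto: "\<sigma> ` {..<n} = {..<n}"
    using assms(5) by (auto simp: bij_betw_def)
  show ?thesis unfolding EFX_approx_def l_def[symmetric]
  proof (intro allI impI ballI)
    fix i j c assume "i < n" "j < n" and c: "c \<in> rr_bundle n m \<sigma> p i"
    obtain t s where "t < n" "i = \<sigma> t" "s < n" "j = \<sigma> s"
      using \<open>i < n\<close> \<open>j < n\<close> onto by (metis imageE lessThan_iff)
    obtain \<mu> where "0 < \<mu>" and band: "\<And>b. b < m \<Longrightarrow> \<mu> \<le> C i b" "\<And>b. b < m \<Longrightarrow> C i b \<le> \<alpha> * \<mu>"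
      using ratio_bounded_band assms(3) \<open>i < n\<close> \<open>0 < m\<close> by blast
    have "cost C i (rr_bundle n m \<sigma> p i - {c}) \<le> cost C i (rr_bundle n m \<sigma> p j) + (\<alpha> - 1) * \<mu>"
      using rr_envy_additive[OF assms(6) inj \<open>s < n\<close> \<open>t < n\<close>, of \<mu> \<alpha> c] band c \<open>0 < \<mu>\<close>
        \<open>i = \<sigma> t\<close> \<open>j = \<sigma> s\<close> by simp
    moreover have "(l - 1) * \<mu> \<le> cost C i (rr_bundle n m \<sigma> p j)"
    proof -
      have "(l - 1) * \<mu> \<le> real (m div n) * \<mu>"
        using ceiling_div_minus_one_le_div \<open>0 < \<mu>\<close> by (simp add: l_def)
      also have "\<dots> \<le> cost C i (rr_bundle n m \<sigma> p j)"
        using cost_rr_bundle_ge[OF assms(6) inj \<open>s < n\<close>] band(1) \<open>0 < \<mu>\<close> \<open>j = \<sigma> s\<close> by simp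
      finally show ?thesis .
    qed
    ultimately show "cost C i (rr_bundle n m \<sigma> p i - {c}) \<le> (1 + (\<alpha> - 1) / (l - 1)) * cost C i (rr_bundle n m \<sigma> p j)"
      using additive_error_le_factor \<open>1 < l\<close> assms(2) by blast
  qed
qed

end
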